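(* Let $\mu_1,\ldots,\mu_n$ be continuous probability measures on $\mathbb{R}^n$ and $\alpha_1,\ldots,\alpha_n\in(0,1)$ such that for all $i$ and all $v\in S^{n-1}$ there is a unique $\lambda\in\mathbb{R}$ with $\mu_i(H^+_{v,\lambda})=\alpha_i$. Let $f_i:S^{n-1}\to\mathbb{R}^n$ ($i\in[n]$) be functions with $\mu_i\big(H^+_{v,\langle v,f_i(v)\rangle}\big)=\alpha_i$ for all $i$ and all $v\in S^{n-1}$. Then there is a hyperplane $H$ with $\mu_i(H^+)=\alpha_i$ for all $i\in[n]$ if and only if there exist $v\in S^{n-1}$ and a hyperplane $H$ with normal $v$ such that $f_i(v)\in H$ for all $i\in[n]$. *)

theory Defs
  imports "HOL-Probability.Probability"
begin

definition halfspace_pos :: "real ^ 'n \<Rightarrow> real \<Rightarrow> (real ^ 'n) set" where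
  "halfspace_pos v lam = {x. inner v x \<ge> lam}"

definition hyperplane :: "real ^ 'n \<Rightarrow> real \<Rightarrow> (real ^ 'n) set" where
  "hyperplane v lam = {x. inner v x = lam}"

definition cont_prob_measure :: "(real ^ 'n) measure \<Rightarrow> bool" where
  "cont_prob_measure M \<longleftrightarrow> prob_space M \<and> sets M = sets borel \<and> absolutely_continuous lborel M"

end

theory Submission
  imports Defs
begin

text \<open>Rescaling the normal to unit length does not change a half-space, so a common
  \<open>\<alpha>\<close>-cut may be assumed to have a unit normal \<open>v\<close>. For such \<open>v\<close> the level \<open>\<lambda>\<close> with
  \<open>\<mu>\<^sub>i(H\<^sup>+\<^sub>v\<^sub>,\<^sub>\<lambda>) = \<alpha>\<^sub>i\<close> is unique and \<open>\<langle>v, f\<^sub>i(v)\<rangle>\<close> is one such level, so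
  \<open>H\<^sup>+\<^sub>v\<^sub>,\<^sub>\<lambda>\<close> is an \<open>\<alpha>\<^sub>i\<close>-cut exactly when \<open>f\<^sub>i(v)\<close> lies on the hyperplane \<open>\<langle>v, x\<rangle> = \<lambda>\<close>.\<close>

lemma halfspace_pos_scaleR:
  assumes "c > 0"
  shows "halfspace_pos (c *\<^sub>R v) (c * lam) = halfspace_pos v lam"
  using assms by (simp add: halfspace_pos_def)

lemma halfspace_pos_sgn:
  assumes "v \<noteq> 0"
  shows "halfspace_pos (sgn v) (lam / norm v) = halfspace_pos v lam"
proof -
  have "norm v > 0" using assms by simp
  then have "halfspace_pos (inverse (norm v) *\<^sub>R v) (inverse (norm v) * lam) = halfspace_pos v lam"
    by (intro halfspace_pos_scaleR) simp
  then show ?thesis by (simp add: sgn_div_norm divide_inverse_commute)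
qed

lemma measure_halfspace_pos_eq_iff_mem_hyperplane:
  assumes "\<exists>!lam. measure M (halfspace_pos v lam) = a"
    and "measure M (halfspace_pos v (inner v x)) = a"
  shows "measure M (halfspace_pos v lam) = a \<longleftrightarrow> x \<in> hyperplane v lam"
  using assms by (auto simp: hyperplane_def)

theorem mainTheorem2:
  fixes \<mu> :: "'n::finite \<Rightarrow> (real ^ 'n) measure"
    and \<alpha> :: "'n \<Rightarrow> real"
    and f :: "'n \<Rightarrow> real ^ 'n \<Rightarrow> real ^ 'n"
  assumes cont: "\<And>i. cont_prob_measure (\<mu> i)"
    and alpha: "\<And>i. 0 < \<alpha> i \<and> \<alpha> i < 1"
    and uniq: "\<And>i v. norm v = 1 \<Longrightarrow> \<exists>!lam. measure (\<mu> i) (halfspace_pos v lam) = \<alpha> i"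
    and fprop: "\<And>i v. norm v = 1 \<Longrightarrow> measure (\<mu> i) (halfspace_pos v (inner v (f i v))) = \<alpha> i"
  shows "(\<exists>v lam. v \<noteq> 0 \<and> (\<forall>i. measure (\<mu> i) (halfspace_pos v lam) = \<alpha> i))
     \<longleftrightarrow> (\<exists>v lam. norm v = 1 \<and> (\<forall>i. f i v \<in> hyperplane v lam))"
proof -
  have cut_iff: "measure (\<mu> i) (halfspace_pos v lam) = \<alpha> i \<longleftrightarrow> f i v \<in> hyperplane v lam"
    if "norm v = 1" for i v lam
    by (rule measure_halfspace_pos_eq_iff_mem_hyperplane[OF uniq[OF that] fprop[OF that]])
  show ?thesis
  proof
    assume "\<exists>v lam. v \<noteq> 0 \<and> (\<forall>i. measure (\<mu> i) (halfspace_pos v lam) = \<alpha> i)"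
    then obtain v lam where "v \<noteq> 0" and cut: "\<And>i. measure (\<mu> i) (halfspace_pos v lam) = \<alpha> i"
      by blast
    have unit: "norm (sgn v) = 1" using \<open>v \<noteq> 0\<close> by (simp add: norm_sgn)
    have "f i (sgn v) \<in> hyperplane (sgn v) (lam / norm v)" for i
      using cut_iff[OF unit] cut[of i] halfspace_pos_sgn[OF \<open>v \<noteq> 0\<close>, of lam] by metis
    with unit show "\<exists>v lam. norm v = 1 \<and> (\<forall>i. f i v \<in> hyperplane v lam)" by blast
  next
    assume "\<exists>v lam. norm v = 1 \<and> (\<forall>i. f i v \<in> hyperplane v lam)"
    then obtain v lam where "norm v = 1" and "\<And>i. f i v \<in> hyperplane v lam" by blast
    with cut_iff have "v \<noteq> 0 \<and> (\<forall>i. measure (\<mu> i) (halfspace_pos v lam) = \<alpha> i)" by auto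
    then show "\<exists>v lam. v \<noteq> 0 \<and> (\<forall>i. measure (\<mu> i) (halfspace_pos v lam) = \<alpha> i)" by blast
  qed
qed

end
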